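(* Let $n,r\geq 1$ and $q\geq 1$. Suppose that, for $n$ prisoners, $r$ rooms and $q$ states (all rooms initially in state $0$), there is a symmetric strategy together with a rule by which a prisoner, as a function of their own observation history, designates themselves a leader, such that for every valid schedule exactly one prisoner eventually designates themselves a leader. Then $n$ prisoners have a symmetric winning strategy for $r$ rooms with $q+4$ states, starting with all rooms in state $0$.
   Context: The game: there are $n$ prisoners and $r$ rooms; each room contains a switch that is in one of $q$ states $\{0,1,\ldots,q-1\}$. The initial state of every room is known to the prisoners. A warden leads prisoners into rooms one at a time according to a schedule, i.e. an infinite sequence of (prisoner, room) pairs; a schedule is valid if every prisoner visits every room infinitely often. The rooms are indistinguishable to the prisoners, and prisoners have no information about time or other visits: on each visit a prisoner observes only the current state of the room, may change it to any state, and may declare that all prisoners have visited all rooms. A (deterministic) strategy assigns to each prisoner a rule determining, from the sequence of states that prisoner has observed so far (and their own previous actions), what new state to set and whether to declare. A strategy is winning if for every valid schedule some prisoner eventually declares, and every declaration is made only at a time when every prisoner has already visited every room. A strategy is symmetric if all prisoners follow the same rule (the same function of their own observation history). *)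

theory Defs
  imports Main
begin

(* A symmetric deterministic strategy is a single rule, applied by every prisoner
   to their own observation history (the list of states they have observed so far,
   including the current one; own previous actions are determined by it):
     act  : history => new state of the room
     decl : history => whether to declare. *)

definition valid_schedule :: "nat \<Rightarrow> nat \<Rightarrow> (nat \<Rightarrow> nat \<times> nat) \<Rightarrow> bool" where
  "valid_schedule n r \<sigma> \<longleftrightarrow>
     (\<forall>t. fst (\<sigma> t) < n \<and> snd (\<sigma> t) < r) \<and>
     (\<forall>p<n. \<forall>k<r. \<forall>N. \<exists>t\<ge>N. \<sigma> t = (p, k))"

(* configuration before step t: room states and prisoners' observation histories;
   all rooms start in state 0 *)
fun run :: "(nat list \<Rightarrow> nat) \<Rightarrow> (nat \<Rightarrow> nat \<times> nat) \<Rightarrow> nat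
             \<Rightarrow> (nat \<Rightarrow> nat) \<times> (nat \<Rightarrow> nat list)" where
  "run act \<sigma> 0 = (\<lambda>_. 0, \<lambda>_. [])"
| "run act \<sigma> (Suc t) =
     (let (rs, hs) = run act \<sigma> t; (p, k) = \<sigma> t; h' = hs p @ [rs k]
      in (rs(k := act h'), hs(p := h')))"

(* history of the prisoner visiting at step t, including the state observed at step t *)
definition obs :: "(nat list \<Rightarrow> nat) \<Rightarrow> (nat \<Rightarrow> nat \<times> nat) \<Rightarrow> nat \<Rightarrow> nat list" where
  "obs act \<sigma> t = snd (run act \<sigma> t) (fst (\<sigma> t)) @ [fst (run act \<sigma> t) (snd (\<sigma> t))]"

definition uses_states :: "nat \<Rightarrow> (nat list \<Rightarrow> nat) \<Rightarrow> bool" where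
  "uses_states q act \<longleftrightarrow> (\<forall>h. act h < q)"

definition symmetric_winning ::
  "nat \<Rightarrow> nat \<Rightarrow> nat \<Rightarrow> (nat list \<Rightarrow> nat) \<Rightarrow> (nat list \<Rightarrow> bool) \<Rightarrow> bool" where
  "symmetric_winning n r q act decl \<longleftrightarrow> uses_states q act \<and>
     (\<forall>\<sigma>. valid_schedule n r \<sigma> \<longrightarrow>
        (\<exists>t. decl (obs act \<sigma> t)) \<and>
        (\<forall>t. decl (obs act \<sigma> t) \<longrightarrow>
             (\<forall>p<n. \<forall>k<r. \<exists>t'\<le>t. \<sigma> t' = (p, k))))"

definition leaders ::
  "nat \<Rightarrow> (nat list \<Rightarrow> nat) \<Rightarrow> (nat list \<Rightarrow> bool) \<Rightarrow> (nat \<Rightarrow> nat \<times> nat) \<Rightarrow> nat set" where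
  "leaders n act lead \<sigma> = {p. p < n \<and> (\<exists>t. fst (\<sigma> t) = p \<and> lead (obs act \<sigma> t))}"

definition symmetric_leader_election ::
  "nat \<Rightarrow> nat \<Rightarrow> nat \<Rightarrow> (nat list \<Rightarrow> nat) \<Rightarrow> (nat list \<Rightarrow> bool) \<Rightarrow> bool" where
  "symmetric_leader_election n r q act lead \<longleftrightarrow> uses_states q act \<and>
     (\<forall>\<sigma>. valid_schedule n r \<sigma> \<longrightarrow> card (leaders n act lead \<sigma>) = 1)"

end

theory Submission
  imports Defs
begin

text \<open>
  The prisoners first run the given election strategy on the states below \<open>q\<close>; the four new
  states \<open>q, q + 1, q + 2, q + 3\<close> are read as blank, token, mark and checked. The leader sets
  every room to blank. Then, in each of \<open>n - 1\<close> rounds, it places a token in a blank room; the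
  first uncounted prisoner to pick it up becomes a marker and marks \<open>r\<close> distinct blank rooms,
  which the leader turns into checked rooms. Once every room is checked the marker has visited
  every room, and the leader resets the rooms to blank for the next round. After the last round
  every prisoner has visited every room, and the leader declares.

  Safety is an invariant of the configuration after the election. That only one prisoner ever
  becomes leader follows from the hypothesis, since the election steps of any run, padded by a
  round-robin tail, form a run of the election strategy under a valid schedule. For liveness, a
  bounded potential increases at every step that changes the configuration beyond the election
  states. Once it is constant, the configuration is frozen up to those states; as the invariant
  exhibits a visit that would change it unless the leader is done, the leader is done and
  declares at its next visit.
\<close>

lemma run_Suc_obs:
  "run act \<sigma> (Suc t) =
     ((fst (run act \<sigma> t))(snd (\<sigma> t) := act (obs act \<sigma> t)),
      (snd (run act \<sigma> t))(fst (\<sigma> t) := obs act \<sigma> t))"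
  by (simp add: obs_def Let_def split: prod.splits)

lemma run_cong: "(\<And>j. j < m \<Longrightarrow> \<sigma> j = \<sigma>' j) \<Longrightarrow> run act \<sigma> m = run act \<sigma>' m"
  by (induction m) (auto simp: Let_def split: prod.splits)

lemma run_states_less:
  assumes "uses_states q act" and "0 < q"
  shows "fst (run act \<sigma> t) k < q"
  using assms by (induction t) (simp_all add: run_Suc_obs uses_states_def del: run.simps(2))

definition pad :: "nat \<Rightarrow> nat \<Rightarrow> (nat \<times> nat) list \<Rightarrow> nat \<Rightarrow> nat \<times> nat" where
  "pad n r ys j =
     (if j < length ys then ys ! j
      else ((j - length ys) mod n, ((j - length ys) div n) mod r))"

lemma pad_append_nth: "pad n r (ys @ y # zs) (length ys) = y"
  by (simp add: pad_def)

lemma run_pad_append: "run act (pad n r (ys @ zs)) (length ys) = run act (pad n r ys) (length ys)"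
  by (rule run_cong) (simp add: pad_def nth_append)

lemma valid_schedule_pad:
  assumes "n \<ge> 1" and "r \<ge> 1" and ys: "\<forall>y\<in>set ys. fst y < n \<and> snd y < r"
  shows "valid_schedule n r (pad n r ys)"
proof -
  have "fst (pad n r ys t) < n \<and> snd (pad n r ys t) < r" for t
    using assms by (auto simp: pad_def)
  moreover have "\<exists>t\<ge>N. pad n r ys t = (p, k)" if p: "p < n" and k: "k < r" for p k N
  proof -
    define j where "j = p + (N * r + k) * n"
    have "pad n r ys (length ys + j) = (p, k)"
      using p k by (simp add: pad_def j_def)
    moreover have "N \<le> length ys + j"
    proof -
      have "N \<le> N * r" using \<open>r \<ge> 1\<close> by simp
      also have "\<dots> \<le> N * r + k" by simp
      also have "\<dots> \<le> (N * r + k) * n" using \<open>n \<ge> 1\<close> by simp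
      also have "\<dots> \<le> j" by (simp add: j_def)
      finally show ?thesis by simp
    qed
    ultimately show ?thesis by blast
  qed
  ultimately show ?thesis by (simp add: valid_schedule_def)
qed

lemma leader_election_exists:
  assumes "symmetric_leader_election n r q act lead" and "valid_schedule n r \<sigma>"
  shows "\<exists>t. lead (obs act \<sigma> t)"
proof -
  have "card (leaders n act lead \<sigma>) = 1"
    using assms by (simp add: symmetric_leader_election_def)
  then obtain p where "p \<in> leaders n act lead \<sigma>" by (auto simp: card_Suc_eq)
  then show ?thesis by (auto simp: leaders_def)
qed

lemma leader_election_unique:
  assumes "symmetric_leader_election n r q act lead" and \<sigma>: "valid_schedule n r \<sigma>"
    and "lead (obs act \<sigma> t)" and "lead (obs act \<sigma> t')"
  shows "fst (\<sigma> t) = fst (\<sigma> t')"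
proof -
  have "fst (\<sigma> t) \<in> leaders n act lead \<sigma>" "fst (\<sigma> t') \<in> leaders n act lead \<sigma>"
    using assms by (auto simp: leaders_def valid_schedule_def)
  moreover have "card (leaders n act lead \<sigma>) = 1"
    using assms by (simp add: symmetric_leader_election_def)
  ultimately show ?thesis by (metis card_1_singletonE singletonD)
qed

definition count_rooms :: "nat \<Rightarrow> (nat \<Rightarrow> nat) \<Rightarrow> (nat \<Rightarrow> bool) \<Rightarrow> nat" where
  "count_rooms r R P = card {k. k < r \<and> P (R k)}"

lemma count_rooms_upd:
  assumes "k < r"
  shows "count_rooms r (R(k := w)) P + of_bool (P (R k)) = count_rooms r R P + of_bool (P w)"
proof -
  have card_split:
    "card {k'. k' < r \<and> P (S k')} = card ({k'. k' < r \<and> P (S k')} - {k}) + of_bool (P (S k))"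
    for S :: "nat \<Rightarrow> nat"
  proof (cases "P (S k)")
    case True
    then have "k \<in> {k'. k' < r \<and> P (S k')}" using assms by simp
    from card_Suc_Diff1[OF _ this] True show ?thesis by simp
  next
    case False
    then have "{k'. k' < r \<and> P (S k')} - {k} = {k'. k' < r \<and> P (S k')}" by auto
    with False show ?thesis by simp
  qed
  have "{k'. k' < r \<and> P ((R(k := w)) k')} - {k} = {k'. k' < r \<and> P (R k')} - {k}" by auto
  with card_split[of "R(k := w)"] have
    "card {k'. k' < r \<and> P ((R(k := w)) k')} = card ({k'. k' < r \<and> P (R k')} - {k}) + of_bool (P w)"
    by (simp only: fun_upd_same)
  with card_split[of R] show ?thesis unfolding count_rooms_def by linarith
qed

lemma count_rooms_le: "count_rooms r R P \<le> r"
proof -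
  have "card {k. k < r \<and> P (R k)} \<le> card {..<r}" by (rule card_mono) auto
  then show ?thesis by (simp add: count_rooms_def)
qed

lemma count_rooms_less_iff: "count_rooms r R P < r \<longleftrightarrow> (\<exists>k<r. \<not> P (R k))"
proof
  assume less: "count_rooms r R P < r"
  show "\<exists>k<r. \<not> P (R k)"
  proof (rule ccontr)
    assume "\<not> (\<exists>k<r. \<not> P (R k))"
    then have "{k. k < r \<and> P (R k)} = {..<r}" by auto
    then show False using less by (simp add: count_rooms_def)
  qed
next
  assume "\<exists>k<r. \<not> P (R k)"
  then have "{k. k < r \<and> P (R k)} \<subset> {..<r}" by auto
  then show "count_rooms r R P < r"
    unfolding count_rooms_def by (metis card_lessThan finite_lessThan psubset_card_mono)
qed

lemma count_rooms_eq_0_iff: "count_rooms r R P = 0 \<longleftrightarrow> (\<forall>k<r. \<not> P (R k))"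
  by (auto simp: count_rooms_def)

lemma count_rooms_cong:
  "(\<And>k. k < r \<Longrightarrow> P (R k) = Q (R' k)) \<Longrightarrow> count_rooms r R P = count_rooms r R' Q"
  unfolding count_rooms_def by (rule arg_cong[where f = card]) auto

lemma count_rooms_eq_1_unique:
  assumes "count_rooms r R P = 1" and "k < r" "k' < r" "P (R k)" "P (R k')"
  shows "k = k'"
  using assms unfolding count_rooms_def
  by (metis (mono_tags, lifting) card_1_singletonE mem_Collect_eq singletonD)

lemma sum_fun_upd_add:
  fixes f :: "'a \<Rightarrow> nat"
  assumes "finite A" and "x \<in> A"
  shows "sum (f(x := v)) A + f x = sum f A + v"
proof -
  have "sum (f(x := v)) (A - {x}) = sum f (A - {x})" by (rule sum.cong) auto
  then show ?thesis using assms by (simp add: sum.remove)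
qed

lemma bounded_mono_stabilises:
  fixes f :: "nat \<Rightarrow> nat"
  assumes "mono f" and "\<And>t. f t \<le> B"
  shows "\<exists>N. \<forall>t\<ge>N. f t = f N"
proof -
  have "finite (range f)"
    using assms(2) by (meson finite_atMost finite_subset image_subsetI atMost_iff)
  then obtain N where "f N = Max (range f)"
    by (metis Max_in image_iff empty_not_UNIV image_is_empty)
  then have "f t \<le> f N" for t using \<open>finite (range f)\<close> by simp
  then show ?thesis using assms(1) by (metis le_antisym monoD)
qed

text \<open>
  \<open>Marker c\<close> has marked \<open>c\<close> rooms and \<open>Sweep c\<close> has blanked \<open>c\<close> rooms; in \<open>Launch i\<close>,
  \<open>Gather c i\<close> and \<open>Reset c i\<close> the leader has counted \<open>i\<close> markers and has checked,
  respectively reset, \<open>c\<close> rooms of the current round.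
\<close>

datatype role =
    Elect "nat list" | Idle | Marker nat
  | Sweep nat | Launch nat | Gather nat nat | Reset nat nat | Done

fun uncounted :: "role \<Rightarrow> bool" where
  "uncounted (Elect _) = True"
| "uncounted Idle = True"
| "uncounted _ = False"

fun is_marker :: "role \<Rightarrow> bool" where
  "is_marker (Marker _) = True"
| "is_marker _ = False"

lemma marker_not_uncounted: "is_marker l \<Longrightarrow> \<not> uncounted l"
  by (cases l) auto

fun is_elect :: "role \<Rightarrow> bool" where
  "is_elect (Elect _) = True"
| "is_elect _ = False"

locale leader_election =
  fixes q n r :: nat and act0 :: "nat list \<Rightarrow> nat" and lead0 :: "nat list \<Rightarrow> bool"
  assumes n_ge_1: "n \<ge> 1" and r_ge_1: "r \<ge> 1" and q_ge_1: "q \<ge> 1"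
    and election: "symmetric_leader_election n r q act0 lead0"
begin

abbreviation blank :: nat where "blank \<equiv> q"
abbreviation token :: nat where "token \<equiv> q + 1"
abbreviation mark :: nat where "mark \<equiv> q + 2"
abbreviation checked :: nat where "checked \<equiv> q + 3"

lemma act0_less: "act0 h < q"
  using election unfolding symmetric_leader_election_def uses_states_def by auto

lemma run_act0_less: "fst (run act0 \<sigma> t) k < q"
  using election q_ge_1 by (intro run_states_less) (auto simp: symmetric_leader_election_def)

text \<open>States \<open>\<ge> q + 4\<close> never occur; \<open>clamp\<close> only keeps the rule within \<open>q + 4\<close> states.\<close>

definition clamp :: "nat \<Rightarrow> nat" where
  "clamp s = (if s < q + 4 then s else blank)"

definition sweep_step :: "nat \<Rightarrow> nat \<Rightarrow> role \<times> nat" where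
  "sweep_step c s =
     (if s < q then (if Suc c \<ge> r then (if n \<le> 1 then Done else Launch 0) else Sweep (Suc c), blank)
      else (Sweep c, clamp s))"

definition idle_step :: "nat \<Rightarrow> role \<times> nat" where
  "idle_step s = (if s = token then (Marker 1, mark) else (Idle, clamp s))"

fun react :: "role \<Rightarrow> nat \<Rightarrow> role \<times> nat" where
  "react (Elect xs) s =
     (if s < q then
        (if lead0 (xs @ [s]) then sweep_step 0 s else (Elect (xs @ [s]), act0 (xs @ [s])))
      else idle_step s)"
| "react Idle s = idle_step s"
| "react (Marker c) s = (if s = blank \<and> c < r then (Marker (Suc c), mark) else (Marker c, clamp s))"
| "react (Sweep c) s = sweep_step c s"
| "react (Launch i) s = (if s = blank then (Gather 0 i, token) else (Launch i, clamp s))"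
| "react (Gather c i) s =
     (if s = mark then (if Suc c \<ge> r then Reset 0 i else Gather (Suc c) i, checked)
      else (Gather c i, clamp s))"
| "react (Reset c i) s =
     (if s = checked then
           (if Suc c \<ge> r then (if Suc i \<ge> n - 1 then Done else Launch (Suc i))
         else Reset (Suc c) i, blank)
      else (Reset c i, clamp s))"
| "react Done s = (Done, clamp s)"

definition role_of :: "nat list \<Rightarrow> role" where
  "role_of h = foldl (\<lambda>l s. fst (react l s)) (Elect []) h"

definition counter_act :: "nat list \<Rightarrow> nat" where
  "counter_act h = (if h = [] then 0 else snd (react (role_of (butlast h)) (last h)))"

definition counter_decl :: "nat list \<Rightarrow> bool" where
  "counter_decl h \<longleftrightarrow> role_of h = Done"

lemma role_of_snoc: "role_of (h @ [s]) = fst (react (role_of h) s)"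
  by (simp add: role_of_def)

lemma counter_act_snoc: "counter_act (h @ [s]) = snd (react (role_of h) s)"
  by (simp add: counter_act_def)

lemma react_less: "snd (react l s) < q + 4"
proof -
  have "act0 h < q + 4" for h using act0_less[of h] by linarith
  then show ?thesis by (cases l) (auto simp: sweep_step_def idle_step_def clamp_def)
qed

lemma uses_states_counter_act: "uses_states (q + 4) counter_act"
  unfolding uses_states_def counter_act_def using react_less by auto

lemma role_of_Elect: "role_of h = Elect xs \<Longrightarrow> xs = h"
proof (induction h arbitrary: xs rule: rev_induct)
  case Nil then show ?case by (simp add: role_of_def)
next
  case (snoc s h)
  then show ?case
    by (cases "role_of h") (auto simp: role_of_snoc sweep_step_def idle_step_def split: if_splits)
qed

lemma react_not_elect: "\<not> is_elect l \<Longrightarrow> \<not> is_elect (fst (react l s))"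
  by (cases l) (auto simp: sweep_step_def idle_step_def)

lemma react_outside_election:
  assumes "\<not> (is_elect l \<and> s < q)" and "s < q + 4"
  shows "(snd (react l s) = s \<or> q \<le> snd (react l s)) \<and> \<not> is_elect (fst (react l s))"
  using assms by (cases l) (auto simp: sweep_step_def idle_step_def clamp_def)

text \<open>Round \<open>i\<close> of the leader occupies the interval from \<open>phase_base i\<close> to \<open>phase_base (Suc i)\<close>.\<close>

definition phase_base :: "nat \<Rightarrow> nat" where
  "phase_base i = r + 2 + min i n * (2 * r + 4)"

fun progress :: "role \<Rightarrow> nat" where
  "progress (Elect _) = 0"
| "progress Idle = 0"
| "progress (Marker c) = Suc (min c r)"
| "progress (Sweep c) = Suc (min c r)"
| "progress (Launch i) = phase_base i"
| "progress (Gather c i) = phase_base i + Suc (min c r)"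
| "progress (Reset c i) = phase_base i + r + 2 + min c r"
| "progress Done = phase_base n + 2 * r + 4"

lemma phase_base_le: "phase_base i \<le> phase_base n"
  by (simp add: phase_base_def mult_le_mono1)

lemma progress_le_Done: "progress l \<le> progress Done"
proof (cases l)
  case (Launch i) then show ?thesis using phase_base_le[of i] by simp
next
  case (Gather c i) then show ?thesis using phase_base_le[of i] by (simp add: min_le_iff_disj)
next
  case (Reset c i) then show ?thesis using phase_base_le[of i] by (simp add: min_le_iff_disj)
qed (auto simp: phase_base_def min_le_iff_disj)

lemma progress_Reset_less_Done: "progress (Reset c i) < progress Done"
  using phase_base_le[of i] by (simp add: min_le_iff_disj)

lemma progress_Reset_less_Launch: "Suc i < n \<Longrightarrow> progress (Reset c i) < progress (Launch (Suc i))"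
  by (simp add: phase_base_def min_def)

text \<open>
  Two configurations are equivalent if they differ only in the election states of the rooms
  and in the roles of uncounted prisoners; the counting invariant cannot tell them apart.
\<close>

definition room_equiv :: "nat \<Rightarrow> nat \<Rightarrow> bool" where
  "room_equiv s s' \<longleftrightarrow> s = s' \<or> (s < q \<and> s' < q)"

definition role_equiv :: "role \<Rightarrow> role \<Rightarrow> bool" where
  "role_equiv l l' \<longleftrightarrow> l = l' \<or> (uncounted l \<and> uncounted l')"

lemma room_equiv_trans: "room_equiv s s' \<Longrightarrow> room_equiv s' s'' \<Longrightarrow> room_equiv s s''"
  by (auto simp: room_equiv_def)

lemma role_equiv_trans: "role_equiv l l' \<Longrightarrow> role_equiv l' l'' \<Longrightarrow> role_equiv l l''"
  by (auto simp: role_equiv_def)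

definition stalls :: "role \<Rightarrow> nat \<Rightarrow> bool" where
  "stalls l s \<longleftrightarrow> room_equiv s (snd (react l s)) \<and> role_equiv l (fst (react l s))"

lemmas stalls_unfolded = stalls_def room_equiv_def role_equiv_def clamp_def

lemma react_progress_or_stalls:
  assumes "s < q + 4"
  shows "progress l < progress (fst (react l s)) \<or> stalls l s"
proof (cases l)
  case (Reset c i)
  then show ?thesis
    using progress_Reset_less_Done[of c i] progress_Reset_less_Launch[of i c] assms
    by (auto simp: stalls_unfolded phase_base_def)
qed (use assms act0_less in \<open>auto simp: stalls_unfolded sweep_step_def idle_step_def phase_base_def\<close>)

lemma progress_react_mono: "s < q + 4 \<Longrightarrow> progress l \<le> progress (fst (react l s))"
  using react_progress_or_stalls[of s l]
  by (auto simp: stalls_def role_equiv_def elim: uncounted.elims)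

lemma stalls_if_no_progress:
  "s < q + 4 \<Longrightarrow> progress (fst (react l s)) = progress l \<Longrightarrow> stalls l s"
  using react_progress_or_stalls[of s l] by auto

definition markers :: "(nat \<Rightarrow> role) \<Rightarrow> nat set" where
  "markers LS = {p. p < n \<and> is_marker (LS p)}"

definition visited_all :: "(nat \<times> nat) set \<Rightarrow> nat \<Rightarrow> bool" where
  "visited_all V p \<longleftrightarrow> (\<forall>k<r. (p, k) \<in> V)"

definition finished_markers :: "nat set \<Rightarrow> (nat \<Rightarrow> role) \<Rightarrow> (nat \<times> nat) set \<Rightarrow> bool" where
  "finished_markers M LS V \<longleftrightarrow> (\<forall>p\<in>M. LS p = Marker r \<and> visited_all V p)"

definition leader_alone :: "nat \<Rightarrow> (nat \<Rightarrow> role) \<Rightarrow> bool" where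
  "leader_alone L LS \<longleftrightarrow> L < n \<and> \<not> uncounted (LS L) \<and> \<not> is_marker (LS L) \<and>
     (\<forall>p<n. p \<noteq> L \<longrightarrow> uncounted (LS p) \<or> is_marker (LS p))"

definition sweep_inv where
  "sweep_inv L c R LS V \<longleftrightarrow> c < r \<and> count_rooms r R (\<lambda>v. q \<le> v) = c \<and>
     (\<forall>k<r. q \<le> R k \<longrightarrow> R k = blank \<and> (L, k) \<in> V) \<and> markers LS = {}"

definition launch_inv where
  "launch_inv L i R LS V \<longleftrightarrow> Suc i < n \<and> (\<forall>k<r. R k = blank) \<and> visited_all V L \<and>
     card (markers LS) = i \<and> finished_markers (markers LS) LS V"

definition gather_inv where
  "gather_inv L c i R V \<longleftrightarrow> Suc i < n \<and> visited_all V L \<and> c < r \<and>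
     (\<forall>k<r. q \<le> R k \<and> R k \<le> checked) \<and> count_rooms r R (\<lambda>v. v = checked) = c"

definition token_out where
  "token_out i R LS V \<longleftrightarrow> count_rooms r R (\<lambda>v. v = token) = 1 \<and>
     (\<forall>k<r. R k \<noteq> mark \<and> R k \<noteq> checked) \<and>
     card (markers LS) = i \<and> finished_markers (markers LS) LS V"

definition marking where
  "marking i R LS V \<longleftrightarrow> (\<exists>P c. P \<in> markers LS \<and> LS P = Marker c \<and> c \<le> r \<and>
     (\<forall>k<r. R k \<noteq> token) \<and> count_rooms r R (\<lambda>v. v = mark \<or> v = checked) = c \<and>
     (\<forall>k<r. (R k = mark \<or> R k = checked) \<longrightarrow> (P, k) \<in> V) \<and>
     card (markers LS - {P}) = i \<and> finished_markers (markers LS - {P}) LS V)"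

definition reset_inv where
  "reset_inv L c i R LS V \<longleftrightarrow> Suc i < n \<and> visited_all V L \<and> c < r \<and>
     (\<forall>k<r. R k = blank \<or> R k = checked) \<and> count_rooms r R (\<lambda>v. v = blank) = c \<and>
     card (markers LS) = Suc i \<and> finished_markers (markers LS) LS V"

definition done_inv where
  "done_inv L R LS V \<longleftrightarrow> visited_all V L \<and> card (markers LS) = n - 1 \<and>
     finished_markers (markers LS) LS V \<and> (\<forall>k<r. R k \<noteq> token)"

text \<open>
  While the leader gathers, either the token is
  still waiting in a room or exactly one marker \<open>P\<close> is at work, and the marked or checked
  rooms are exactly the rooms it has marked.
\<close>

definition counting_inv :: "nat \<Rightarrow> (nat \<Rightarrow> nat) \<Rightarrow> (nat \<Rightarrow> role) \<Rightarrow> (nat \<times> nat) set \<Rightarrow> bool" where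
  "counting_inv L R LS V \<longleftrightarrow> leader_alone L LS \<and> (case LS L of
      Sweep c \<Rightarrow> sweep_inv L c R LS V
    | Launch i \<Rightarrow> launch_inv L i R LS V
    | Gather c i \<Rightarrow> gather_inv L c i R V \<and> (token_out i R LS V \<or> marking i R LS V)
    | Reset c i \<Rightarrow> reset_inv L c i R LS V
    | Done \<Rightarrow> done_inv L R LS V
    | _ \<Rightarrow> False)"

lemma visited_all_mono: "visited_all V p \<Longrightarrow> V \<subseteq> V' \<Longrightarrow> visited_all V' p"
  by (auto simp: visited_all_def)

lemma finished_markers_upd:
  "finished_markers M LS V \<Longrightarrow> p \<notin> M \<Longrightarrow> V \<subseteq> V' \<Longrightarrow> finished_markers M (LS(p := l)) V'"
  by (auto simp: finished_markers_def visited_all_def)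

lemma markers_upd:
  "markers (LS(p := l)) = (if p < n \<and> is_marker l then insert p (markers LS) else markers LS - {p})"
  by (auto simp: markers_def)

lemma leader_not_marker: "leader_alone L LS \<Longrightarrow> L \<notin> markers LS"
  by (auto simp: leader_alone_def markers_def)

definition conf_equiv ::
    "(nat \<Rightarrow> nat) \<Rightarrow> (nat \<Rightarrow> role) \<Rightarrow> (nat \<Rightarrow> nat) \<Rightarrow> (nat \<Rightarrow> role) \<Rightarrow> bool" where
  "conf_equiv R LS R' LS' \<longleftrightarrow>
     (\<forall>k<r. room_equiv (R k) (R' k)) \<and> (\<forall>p<n. role_equiv (LS p) (LS' p))"

lemma conf_equiv_refl: "conf_equiv R LS R LS"
  by (simp add: conf_equiv_def room_equiv_def role_equiv_def)

lemma conf_equiv_trans: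
  "conf_equiv R LS R' LS' \<Longrightarrow> conf_equiv R' LS' R'' LS'' \<Longrightarrow> conf_equiv R LS R'' LS''"
  unfolding conf_equiv_def by (blast intro: room_equiv_trans role_equiv_trans)

lemma conf_equiv_counted_role:
  "conf_equiv R LS R' LS' \<Longrightarrow> p < n \<Longrightarrow> \<not> uncounted (LS p) \<Longrightarrow> LS' p = LS p"
  by (auto simp: conf_equiv_def role_equiv_def)

lemma conf_equiv_room: "conf_equiv R LS R' LS' \<Longrightarrow> k < r \<Longrightarrow> q \<le> R k \<Longrightarrow> R' k = R k"
  by (auto simp: conf_equiv_def room_equiv_def)

lemma conf_equiv_room_eq:
  "conf_equiv R LS R' LS' \<Longrightarrow> k < r \<Longrightarrow> q \<le> v \<Longrightarrow> R' k = v \<longleftrightarrow> R k = v"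
  by (auto simp: conf_equiv_def room_equiv_def)

lemma conf_equiv_markers:
  assumes "conf_equiv R LS R' LS'"
  shows "markers LS' = markers LS"
proof -
  have "is_marker (LS' p) \<longleftrightarrow> is_marker (LS p)" if "p < n" for p
    using assms that marker_not_uncounted by (auto simp: conf_equiv_def role_equiv_def)
  then show ?thesis by (auto simp: markers_def)
qed

lemma conf_equiv_count_rooms:
  assumes "conf_equiv R LS R' LS'" and "\<And>v. P v \<Longrightarrow> q \<le> v"
  shows "count_rooms r R' P = count_rooms r R P"
proof (rule count_rooms_cong)
  fix k assume "k < r"
  then have "R' k = R k \<or> (R k < q \<and> R' k < q)"
    using assms(1) by (auto simp: conf_equiv_def room_equiv_def)
  then show "P (R' k) = P (R k)" using assms(2) by (auto dest: leD)
qed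

lemma conf_equiv_finished_markers:
  assumes "conf_equiv R LS R' LS'" and "finished_markers M LS V" and "M \<subseteq> markers LS" and "V \<subseteq> V'"
  shows "finished_markers M LS' V'"
proof (unfold finished_markers_def, intro ballI)
  fix p assume "p \<in> M"
  then have "p < n" "\<not> uncounted (LS p)"
    using assms(3) marker_not_uncounted by (auto simp: markers_def)
  then have "LS' p = LS p" by (rule conf_equiv_counted_role[OF assms(1)])
  then show "LS' p = Marker r \<and> visited_all V' p"
    using assms(2,4) \<open>p \<in> M\<close> by (auto simp: finished_markers_def intro: visited_all_mono)
qed

lemma conf_equiv_leader_alone:
  assumes equiv: "conf_equiv R LS R' LS'" and alone: "leader_alone L LS"
  shows "leader_alone L LS'"
proof -
  have "LS' L = LS L"
    using alone by (intro conf_equiv_counted_role[OF equiv]) (auto simp: leader_alone_def)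
  moreover have "uncounted (LS' p) \<or> is_marker (LS' p)" if "p < n" "p \<noteq> L" for p
  proof -
    have "LS' p = LS p \<or> uncounted (LS' p)" using equiv that
      by (auto simp: conf_equiv_def role_equiv_def)
    then show ?thesis using alone that by (auto simp: leader_alone_def)
  qed
  ultimately show ?thesis using alone by (simp add: leader_alone_def)
qed

lemma token_out_conf_equiv:
  assumes "conf_equiv R LS R' LS'" and "token_out i R LS V" and "V \<subseteq> V'"
  shows "token_out i R' LS' V'"
proof -
  have "count_rooms r R' (\<lambda>v. v = token) = count_rooms r R (\<lambda>v. v = token)"
    using assms(1) by (rule conf_equiv_count_rooms) simp
  then show ?thesis
    using assms conf_equiv_room_eq[OF assms(1)] conf_equiv_markers[OF assms(1)]
      conf_equiv_finished_markers[OF assms(1)]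
    by (auto simp: token_out_def)
qed

lemma marking_conf_equiv:
  assumes equiv: "conf_equiv R LS R' LS'" and "marking i R LS V" and "V \<subseteq> V'"
  shows "marking i R' LS' V'"
proof -
  obtain P c where P: "P \<in> markers LS" "LS P = Marker c" "c \<le> r" "\<forall>k<r. R k \<noteq> token"
    "count_rooms r R (\<lambda>v. v = mark \<or> v = checked) = c"
    "\<forall>k<r. (R k = mark \<or> R k = checked) \<longrightarrow> (P, k) \<in> V"
    "card (markers LS - {P}) = i" "finished_markers (markers LS - {P}) LS V"
    using assms(2) unfolding marking_def by blast
  have "LS' P = LS P"
    using P(1) marker_not_uncounted
      by (intro conf_equiv_counted_role[OF equiv]) (auto simp: markers_def)
  moreover have "count_rooms r R' (\<lambda>v. v = mark \<or> v = checked) = c"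
    unfolding P(5)[symmetric] by (rule conf_equiv_count_rooms[OF equiv]) auto
  moreover have "finished_markers (markers LS - {P}) LS' V'"
    by (rule conf_equiv_finished_markers[OF equiv P(8) _ assms(3)]) auto
  ultimately show ?thesis
    unfolding marking_def using P assms(3) conf_equiv_markers[OF equiv] conf_equiv_room_eq[OF equiv]
    by (intro exI[of _ P] exI[of _ c]) auto
qed

lemma counting_inv_conf_equiv:
  assumes inv: "counting_inv L R LS V" and equiv: "conf_equiv R LS R' LS'" and "V \<subseteq> V'"
  shows "counting_inv L R' LS' V'"
proof -
  have alone: "leader_alone L LS" using inv by (simp add: counting_inv_def)
  then have leader_role: "LS' L = LS L"
    by (intro conf_equiv_counted_role[OF equiv]) (auto simp: leader_alone_def)
  have alone': "leader_alone L LS'" using equiv alone by (rule conf_equiv_leader_alone)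
  note rooms = conf_equiv_room[OF equiv] conf_equiv_room_eq[OF equiv]
  note markers = conf_equiv_markers[OF equiv] conf_equiv_finished_markers[OF equiv]
  have counts:
    "count_rooms r R' (\<lambda>v. q \<le> v) = count_rooms r R (\<lambda>v. q \<le> v)"
    "count_rooms r R' (\<lambda>v. v = blank) = count_rooms r R (\<lambda>v. v = blank)"
    "count_rooms r R' (\<lambda>v. v = checked) = count_rooms r R (\<lambda>v. v = checked)"
    by (rule conf_equiv_count_rooms[OF equiv]; simp)+
  have visited: "visited_all V p \<Longrightarrow> visited_all V' p" for p
    using \<open>V \<subseteq> V'\<close> by (rule visited_all_mono[rotated])
  have room_ge: "q \<le> R' k \<longleftrightarrow> q \<le> R k" if "k < r" for k
    using equiv that by (auto simp: conf_equiv_def room_equiv_def)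
  show ?thesis
  proof (cases "LS L")
    case (Sweep c)
    then show ?thesis
      using inv alone' leader_role markers rooms room_ge \<open>V \<subseteq> V'\<close> counts
      unfolding counting_inv_def sweep_inv_def by auto
  next
    case (Launch i)
    then show ?thesis
      using inv alone' leader_role markers rooms visited \<open>V \<subseteq> V'\<close>
      unfolding counting_inv_def launch_inv_def by auto
  next
    case (Gather c i)
    then have P: "gather_inv L c i R V" using inv by (simp add: counting_inv_def)
    then have "\<forall>k<r. R' k = R k" using rooms(1) by (simp add: gather_inv_def)
    then have "gather_inv L c i R' V'"
      using P visited counts by (simp add: gather_inv_def)
    then show ?thesis
      using inv Gather alone' leader_role token_out_conf_equiv[OF equiv] marking_conf_equiv[OF equiv]
        \<open>V \<subseteq> V'\<close>
      unfolding counting_inv_def by auto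
  next
    case (Reset c i)
    then show ?thesis
      using inv alone' leader_role markers rooms visited counts \<open>V \<subseteq> V'\<close>
      unfolding counting_inv_def reset_inv_def by auto
  next
    case Done
    then show ?thesis
      using inv alone' leader_role markers rooms visited \<open>V \<subseteq> V'\<close>
      unfolding counting_inv_def done_inv_def by auto
  qed (use inv in \<open>auto simp: counting_inv_def\<close>)
qed

lemma leader_alone_upd_leader:
  "leader_alone L LS \<Longrightarrow> \<not> uncounted l \<Longrightarrow> \<not> is_marker l \<Longrightarrow> leader_alone L (LS(L := l))"
  by (auto simp: leader_alone_def)

lemma leader_alone_upd_other:
  "leader_alone L LS \<Longrightarrow> p \<noteq> L \<Longrightarrow> uncounted l \<or> is_marker l \<Longrightarrow> leader_alone L (LS(p := l))"
  by (auto simp: leader_alone_def)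

lemma sweep_inv_count_Suc:
  assumes "sweep_inv L c R LS V" and "k < r" and "R k < q"
  shows "count_rooms r (R(k := blank)) (\<lambda>v. q \<le> v) = Suc c"
  using count_rooms_upd[OF assms(2), of R blank "\<lambda>v. q \<le> v"] assms by (simp add: sweep_inv_def)

lemma sweep_inv_complete:
  assumes P: "sweep_inv L c R LS V" and k: "k < r" and s: "R k < q" and "r \<le> Suc c"
  shows "\<forall>k'<r. (R(k := blank)) k' = blank" and "visited_all (insert (L, k) V) L"
proof -
  show all_blank: "\<forall>k'<r. (R(k := blank)) k' = blank"
  proof (intro allI impI)
    fix k' assume k': "k' < r"
    have "q \<le> (R(k := blank)) k'"
      using count_rooms_less_iff[of r "R(k := blank)" "\<lambda>v. q \<le> v"] sweep_inv_count_Suc[OF P k s]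
        \<open>r \<le> Suc c\<close> k' by (metis not_less)
    then show "(R(k := blank)) k' = blank" using P k' by (auto simp: sweep_inv_def)
  qed
  show "visited_all (insert (L, k) V) L"
  proof (unfold visited_all_def, intro allI impI)
    fix k' assume k': "k' < r"
    show "(L, k') \<in> insert (L, k) V"
    proof (cases "k' = k")
      case False
      then have "q \<le> R k'" using all_blank k' by (metis fun_upd_other order_refl)
      then show ?thesis using P k' by (simp add: sweep_inv_def)
    qed simp
  qed
qed

lemma counting_inv_sweep:
  assumes inv: "counting_inv L R LS V" and L: "LS L = Sweep c" and k: "k < r" and s: "R k < q"
  shows "counting_inv L (R(k := blank))
           (LS(L := if Suc c \<ge> r then (if n \<le> 1 then Done else Launch 0) else Sweep (Suc c)))
           (insert (L, k) V)"
proof -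
  define l where "l = (if Suc c \<ge> r then (if n \<le> 1 then Done else Launch 0) else Sweep (Suc c))"
  let ?R = "R(k := blank)" and ?V = "insert (L, k) V" and ?LS = "LS(L := l)"
  have alone: "leader_alone L LS" and P: "sweep_inv L c R LS V"
    using inv L by (auto simp: counting_inv_def)
  have alone': "leader_alone L ?LS" using alone
    by (intro leader_alone_upd_leader) (auto simp: l_def)
  have no_markers: "markers ?LS = {}" using P by (auto simp: markers_upd sweep_inv_def l_def)
  show ?thesis
  proof (cases "Suc c \<ge> r")
    case False
    have "sweep_inv L (Suc c) ?R ?LS ?V"
      using False sweep_inv_count_Suc[OF P k s] no_markers P unfolding sweep_inv_def by auto
    then show ?thesis using alone' False unfolding counting_inv_def l_def by simp
  next
    case True
    note complete = sweep_inv_complete[OF P k s True]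
    show ?thesis
    proof (cases "n \<le> 1")
      case True
      then have "done_inv L ?R ?LS ?V"
        using complete no_markers n_ge_1 by (auto simp: done_inv_def finished_markers_def)
      then show ?thesis using alone' True \<open>Suc c \<ge> r\<close> unfolding counting_inv_def l_def by simp
    next
      case False
      then have "launch_inv L 0 ?R ?LS ?V"
        using complete no_markers by (auto simp: launch_inv_def finished_markers_def)
      then show ?thesis using alone' False \<open>Suc c \<ge> r\<close> unfolding counting_inv_def l_def by simp
    qed
  qed
qed

lemma counting_inv_launch:
  assumes inv: "counting_inv L R LS V" and L: "LS L = Launch i" and k: "k < r" and s: "R k = blank"
  shows "counting_inv L (R(k := token)) (LS(L := Gather 0 i)) (insert (L, k) V)"
proof -
  let ?R = "R(k := token)" and ?V = "insert (L, k) V" and ?LS = "LS(L := Gather 0 i)"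
  have alone: "leader_alone L LS" and P: "launch_inv L i R LS V"
    using inv L by (auto simp: counting_inv_def)
  have alone': "leader_alone L ?LS" using alone by (intro leader_alone_upd_leader) auto
  have markers_eq: "markers ?LS = markers LS" using alone
    by (auto simp: markers_upd leader_not_marker)
  have "count_rooms r R (\<lambda>v. v = token) = 0"
    using P by (auto simp: count_rooms_eq_0_iff launch_inv_def)
  then have one_token: "count_rooms r ?R (\<lambda>v. v = token) = 1"
    using count_rooms_upd[OF k, of R token "\<lambda>v. v = token"] s by simp
  have "count_rooms r ?R (\<lambda>v. v = checked) = 0"
    using P by (auto simp: count_rooms_eq_0_iff launch_inv_def)
  moreover have "finished_markers (markers LS) ?LS ?V"
    using P alone leader_not_marker by (auto simp: launch_inv_def intro: finished_markers_upd)
  ultimately have "gather_inv L 0 i ?R ?V" and "token_out i ?R ?LS ?V"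
    using P one_token markers_eq r_ge_1 by (auto simp: gather_inv_def token_out_def launch_inv_def
        intro: visited_all_mono)
  then show ?thesis using alone' unfolding counting_inv_def by simp
qed

text \<open>
  Every marked or checked room has been visited by the marker, so once all rooms are checked
  the marker is done.
\<close>

lemma marking_all_checked:
  assumes "marking i R LS V" and all_checked: "\<forall>k<r. R k = checked"
  shows "card (markers LS) = Suc i" and "finished_markers (markers LS) LS V"
proof -
  obtain P c where P: "P \<in> markers LS" "LS P = Marker c"
    "count_rooms r R (\<lambda>v. v = mark \<or> v = checked) = c"
    "\<forall>k<r. (R k = mark \<or> R k = checked) \<longrightarrow> (P, k) \<in> V"
    "card (markers LS - {P}) = i" "finished_markers (markers LS - {P}) LS V"
    using assms(1) unfolding marking_def by blast
  have "\<not> count_rooms r R (\<lambda>v. v = mark \<or> v = checked) < r"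
    using all_checked by (simp add: count_rooms_less_iff)
  with P(3) count_rooms_le[of r R] have "c = r" by (metis le_antisym not_less)
  moreover have "visited_all V P" using P(4) all_checked by (simp add: visited_all_def)
  ultimately have "finished_markers {P} LS V" using P(2) by (simp add: finished_markers_def)
  with P(6) show "finished_markers (markers LS) LS V"
    by (auto simp: finished_markers_def)
  have "finite (markers LS)" by (simp add: markers_def)
  from card_Suc_Diff1[OF this P(1)] P(5) show "card (markers LS) = Suc i" by simp
qed

lemma counting_inv_gather:
  assumes inv: "counting_inv L R LS V" and L: "LS L = Gather c i" and k: "k < r" and s: "R k = mark"
  shows "counting_inv L (R(k := checked)) (LS(L := if Suc c \<ge> r then Reset 0 i else Gather (Suc c) i))
           (insert (L, k) V)"
proof -
  define l where "l = (if Suc c \<ge> r then Reset 0 i else Gather (Suc c) i)"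
  let ?R = "R(k := checked)" and ?V = "insert (L, k) V" and ?LS = "LS(L := l)"
  have alone: "leader_alone L LS" and G: "gather_inv L c i R V"
    and "token_out i R LS V \<or> marking i R LS V"
    using inv L by (auto simp: counting_inv_def)
  moreover have "\<not> token_out i R LS V" using s k by (auto simp: token_out_def)
  ultimately have "marking i R LS V" by simp
  then obtain P c' where P': "P \<in> markers LS" "LS P = Marker c'" "c' \<le> r" "\<forall>k<r. R k \<noteq> token"
    "count_rooms r R (\<lambda>v. v = mark \<or> v = checked) = c'"
    "\<forall>k<r. (R k = mark \<or> R k = checked) \<longrightarrow> (P, k) \<in> V"
    "card (markers LS - {P}) = i" "finished_markers (markers LS - {P}) LS V"
    unfolding marking_def by blast
  have alone': "leader_alone L ?LS" using alone
    by (intro leader_alone_upd_leader) (auto simp: l_def)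
  have L_not_marker: "L \<notin> markers LS" using alone by (rule leader_not_marker)
  have markers_eq: "markers ?LS = markers LS" using L_not_marker by (auto simp: markers_upd l_def)
  have "count_rooms r ?R (\<lambda>v. v = mark \<or> v = checked) = c'"
    using count_rooms_upd[OF k, of R checked "\<lambda>v. v = mark \<or> v = checked"] P'(5) s by simp
  then have marking': "marking i ?R ?LS ?V"
    unfolding marking_def using P' markers_eq L_not_marker s
    by (intro exI[of _ P] exI[of _ c']) (auto intro: finished_markers_upd)
  have checked: "count_rooms r ?R (\<lambda>v. v = checked) = Suc c"
    using count_rooms_upd[OF k, of R checked "\<lambda>v. v = checked"] G s by (simp add: gather_inv_def)
  have range: "\<forall>k'<r. q \<le> ?R k' \<and> ?R k' \<le> checked" using G by (auto simp: gather_inv_def)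
  show ?thesis
  proof (cases "Suc c \<ge> r")
    case False
    have "gather_inv L (Suc c) i ?R ?V"
      using G False checked range by (auto simp: gather_inv_def intro: visited_all_mono)
    then show ?thesis using alone' marking' False unfolding counting_inv_def l_def by simp
  next
    case True
    have all_checked: "\<forall>k'<r. ?R k' = checked"
      using count_rooms_less_iff[of r ?R "\<lambda>v. v = checked"] checked True G
      by (auto simp: gather_inv_def)
    have "reset_inv L 0 i ?R ?LS ?V"
      using G r_ge_1 all_checked marking_all_checked[OF marking' all_checked] markers_eq
      by (auto simp: reset_inv_def gather_inv_def count_rooms_eq_0_iff intro: visited_all_mono)
    then show ?thesis using alone' True unfolding counting_inv_def l_def by simp
  qed
qed

lemma counting_inv_reset:
  assumes inv: "counting_inv L R LS V" and L: "LS L = Reset c i" and k: "k < r" and s: "R k = checked"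
  shows "counting_inv L (R(k := blank))
           (LS(L := if Suc c \<ge> r then (if Suc i \<ge> n - 1 then Done else Launch (Suc i))
                    else Reset (Suc c) i))
           (insert (L, k) V)"
proof -
  define l where
    "l = (if Suc c \<ge> r then (if Suc i \<ge> n - 1 then Done else Launch (Suc i)) else Reset (Suc c) i)"
  let ?R = "R(k := blank)" and ?V = "insert (L, k) V" and ?LS = "LS(L := l)"
  have alone: "leader_alone L LS" and P: "reset_inv L c i R LS V"
    using inv L by (auto simp: counting_inv_def)
  have alone': "leader_alone L ?LS" using alone
    by (intro leader_alone_upd_leader) (auto simp: l_def)
  have L_not_marker: "L \<notin> markers LS" using alone by (rule leader_not_marker)
  have markers_eq: "markers ?LS = markers LS" using L_not_marker by (auto simp: markers_upd l_def)
  have finished: "finished_markers (markers LS) ?LS ?V"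
    using P L_not_marker by (auto simp: reset_inv_def intro: finished_markers_upd)
  have blanks: "count_rooms r ?R (\<lambda>v. v = blank) = Suc c"
    using count_rooms_upd[OF k, of R blank "\<lambda>v. v = blank"] P s by (simp add: reset_inv_def)
  show ?thesis
  proof (cases "Suc c \<ge> r")
    case False
    have "reset_inv L (Suc c) i ?R ?LS ?V"
      using P False blanks markers_eq finished by (auto simp: reset_inv_def intro: visited_all_mono)
    then show ?thesis using alone' False unfolding counting_inv_def l_def by simp
  next
    case True
    have all_blank: "\<forall>k'<r. ?R k' = blank"
      using count_rooms_less_iff[of r ?R "\<lambda>v. v = blank"] blanks True P
        by (auto simp: reset_inv_def)
    show ?thesis
    proof (cases "Suc i \<ge> n - 1")
      case True
      then have "done_inv L ?R ?LS ?V"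
        using P markers_eq finished all_blank
          by (auto simp: done_inv_def reset_inv_def intro: visited_all_mono)
      then show ?thesis using alone' True \<open>Suc c \<ge> r\<close> unfolding counting_inv_def l_def by simp
    next
      case False
      then have "launch_inv L (Suc i) ?R ?LS ?V"
        using P markers_eq finished all_blank
          by (auto simp: launch_inv_def reset_inv_def intro: visited_all_mono)
      then show ?thesis using alone' False \<open>Suc c \<ge> r\<close> unfolding counting_inv_def l_def by simp
    qed
  qed
qed

lemma counting_inv_token_seen:
  assumes inv: "counting_inv L R LS V" and k: "k < r" and s: "R k = token"
  obtains c i where "LS L = Gather c i" and "gather_inv L c i R V" and "token_out i R LS V"
proof (cases "LS L")
  case (Gather c i)
  then have "gather_inv L c i R V" "token_out i R LS V \<or> marking i R LS V"
    using inv by (auto simp: counting_inv_def)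
  moreover have "\<not> marking i R LS V" using k s by (auto simp: marking_def)
  ultimately show ?thesis using that Gather by blast
next
  case (Sweep c) then show ?thesis using inv k s by (fastforce simp: counting_inv_def sweep_inv_def)
next
  case (Launch i) then show ?thesis using inv k s by (simp add: counting_inv_def launch_inv_def)
next
  case (Reset c i) then show ?thesis using inv k s
    by (fastforce simp: counting_inv_def reset_inv_def)
next
  case Done then show ?thesis using inv k s by (simp add: counting_inv_def done_inv_def)
qed (use inv in \<open>simp_all add: counting_inv_def\<close>)

lemma counting_inv_marker_active:
  assumes inv: "counting_inv L R LS V" and p: "p < n" and M: "LS p = Marker c" "c < r"
  obtains c' i where "LS L = Gather c' i" and "gather_inv L c' i R V" and "marking i R LS V"
proof -
  have p_marker: "p \<in> markers LS" using p M by (simp add: markers_def)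
  show ?thesis
  proof (cases "LS L")
    case (Gather c' i)
    then have "gather_inv L c' i R V" "token_out i R LS V \<or> marking i R LS V"
      using inv by (auto simp: counting_inv_def)
    moreover have "\<not> token_out i R LS V"
      using p_marker M by (auto simp: token_out_def finished_markers_def)
    ultimately show ?thesis using that Gather by blast
  next
    case (Sweep c) then show ?thesis using inv p_marker
      by (simp add: counting_inv_def sweep_inv_def)
  next
    case (Launch i) then show ?thesis
      using inv p_marker M by (auto simp: counting_inv_def launch_inv_def finished_markers_def)
  next
    case (Reset c i) then show ?thesis
      using inv p_marker M by (auto simp: counting_inv_def reset_inv_def finished_markers_def)
  next
    case Done then show ?thesis
      using inv p_marker M by (auto simp: counting_inv_def done_inv_def finished_markers_def)
  qed (use inv in \<open>simp_all add: counting_inv_def\<close>)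
qed

lemma counting_inv_take_token:
  assumes inv: "counting_inv L R LS V" and p: "p < n" "p \<noteq> L" and idle: "uncounted (LS p)"
    and k: "k < r" and s: "R k = token"
  shows "counting_inv L (R(k := mark)) (LS(p := Marker 1)) (insert (p, k) V)"
proof -
  let ?R = "R(k := mark)" and ?V = "insert (p, k) V" and ?LS = "LS(p := Marker 1)"
  have alone: "leader_alone L LS" using inv by (simp add: counting_inv_def)
  obtain c i where L: "LS L = Gather c i" and G: "gather_inv L c i R V" and T: "token_out i R LS V"
    using counting_inv_token_seen[OF inv k s] .
  have p_new: "p \<notin> markers LS" using idle marker_not_uncounted by (auto simp: markers_def)
  have alone': "leader_alone L ?LS" using alone p by (intro leader_alone_upd_other) auto
  have markers': "markers ?LS = insert p (markers LS)" using p by (simp add: markers_upd)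
  have no_marks: "\<forall>k<r. R k \<noteq> mark \<and> R k \<noteq> checked" using T by (simp add: token_out_def)
  have "count_rooms r R (\<lambda>v. v = mark \<or> v = checked) = 0"
    using no_marks by (simp add: count_rooms_eq_0_iff)
  then have one_mark: "count_rooms r ?R (\<lambda>v. v = mark \<or> v = checked) = 1"
    using count_rooms_upd[OF k, of R mark "\<lambda>v. v = mark \<or> v = checked"] s by simp
  have no_token: "\<forall>k'<r. ?R k' \<noteq> token"
  proof (intro allI impI)
    fix k' assume k': "k' < r"
    have "k' = k" if "R k' = token"
      using count_rooms_eq_1_unique[of r R "\<lambda>v. v = token" k' k] T k k' s that
      by (simp add: token_out_def)
    then show "?R k' \<noteq> token" by auto
  qed
  have "gather_inv L c i ?R ?V"
    using G count_rooms_upd[OF k, of R mark "\<lambda>v. v = checked"] s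
    by (auto simp: gather_inv_def intro: visited_all_mono)
  moreover have "marking i ?R ?LS ?V"
    unfolding marking_def
    using T markers' p_new one_mark no_token no_marks r_ge_1
    by (intro exI[of _ p] exI[of _ 1]) (auto simp: token_out_def intro: finished_markers_upd)
  ultimately show ?thesis using alone' L p unfolding counting_inv_def by simp
qed

lemma counting_inv_mark:
  assumes inv: "counting_inv L R LS V" and p: "p < n" "p \<noteq> L" and M: "LS p = Marker c" "c < r"
    and k: "k < r" and s: "R k = blank"
  shows "counting_inv L (R(k := mark)) (LS(p := Marker (Suc c))) (insert (p, k) V)"
proof -
  let ?R = "R(k := mark)" and ?V = "insert (p, k) V" and ?LS = "LS(p := Marker (Suc c))"
  have alone: "leader_alone L LS" using inv by (simp add: counting_inv_def)
  have p_marker: "p \<in> markers LS" using p M by (simp add: markers_def)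
  obtain c' i where L: "LS L = Gather c' i" and G: "gather_inv L c' i R V" and MK: "marking i R LS V"
    using counting_inv_marker_active[OF inv p(1) M] .
  obtain P cp where P': "P \<in> markers LS" "LS P = Marker cp" "\<forall>k<r. R k \<noteq> token"
    "count_rooms r R (\<lambda>v. v = mark \<or> v = checked) = cp"
    "\<forall>k<r. (R k = mark \<or> R k = checked) \<longrightarrow> (P, k) \<in> V"
    "card (markers LS - {P}) = i" "finished_markers (markers LS - {P}) LS V"
    using MK unfolding marking_def by blast
  have "p = P"
  proof (rule ccontr)
    assume "p \<noteq> P"
    then have "LS p = Marker r" using P'(7) p_marker by (auto simp: finished_markers_def)
    then show False using M by simp
  qed
  then have cp: "cp = c" using P'(2) M by simp
  have alone': "leader_alone L ?LS" using alone p by (intro leader_alone_upd_other) auto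
  have markers_eq: "markers ?LS = markers LS" using p p_marker by (auto simp: markers_upd)
  have "gather_inv L c' i ?R ?V"
    using G count_rooms_upd[OF k, of R mark "\<lambda>v. v = checked"] s
    by (auto simp: gather_inv_def intro: visited_all_mono)
  moreover have "count_rooms r ?R (\<lambda>v. v = mark \<or> v = checked) = Suc c"
    using count_rooms_upd[OF k, of R mark "\<lambda>v. v = mark \<or> v = checked"] P'(4) cp s by simp
  then have "marking i ?R ?LS ?V"
    unfolding marking_def using P' \<open>p = P\<close> markers_eq M
    by (intro exI[of _ p] exI[of _ "Suc c"]) (auto intro: finished_markers_upd)
  ultimately show ?thesis using alone' L p unfolding counting_inv_def by simp
qed

lemma counting_inv_stalls:
  assumes inv: "counting_inv L R LS V" and "stalls (LS p) (R k)"
  shows "counting_inv L (R(k := snd (react (LS p) (R k)))) (LS(p := fst (react (LS p) (R k))))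
           (insert (p, k) V)"
proof (rule counting_inv_conf_equiv[OF inv])
  show "conf_equiv R LS (R(k := snd (react (LS p) (R k)))) (LS(p := fst (react (LS p) (R k))))"
    using assms(2) by (simp add: stalls_def conf_equiv_def room_equiv_def role_equiv_def)
qed auto

lemma counting_inv_leader_moves:
  assumes inv: "counting_inv L R LS V" and k: "k < r" and s: "R k < q + 4"
    and moves: "\<not> stalls (LS L) (R k)"
  shows "counting_inv L (R(k := snd (react (LS L) (R k)))) (LS(L := fst (react (LS L) (R k))))
           (insert (L, k) V)"
proof (cases "LS L")
  case (Sweep c)
  then have "R k < q" using moves s by (auto simp: stalls_unfolded sweep_step_def split: if_splits)
  then show ?thesis using counting_inv_sweep[OF inv Sweep k] Sweep by (simp add: sweep_step_def)
next
  case (Launch i)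
  then have "R k = blank" using moves s by (auto simp: stalls_unfolded split: if_splits)
  then show ?thesis using counting_inv_launch[OF inv Launch k] Launch by simp
next
  case (Gather c i)
  then have "R k = mark" using moves s by (auto simp: stalls_unfolded split: if_splits)
  then show ?thesis using counting_inv_gather[OF inv Gather k] Gather by simp
next
  case (Reset c i)
  then have "R k = checked" using moves s by (auto simp: stalls_unfolded split: if_splits)
  then show ?thesis using counting_inv_reset[OF inv Reset k] Reset by simp
next
  case Done then show ?thesis using moves s by (auto simp: stalls_unfolded)
qed (use inv in \<open>auto simp: counting_inv_def leader_alone_def\<close>)

lemma counting_inv_follower_moves:
  assumes inv: "counting_inv L R LS V" and p: "p < n" "p \<noteq> L" and k: "k < r" and s: "R k < q + 4"
    and moves: "\<not> stalls (LS p) (R k)"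
    and no_rival: "\<And>xs. LS p = Elect xs \<Longrightarrow> R k < q \<Longrightarrow> \<not> lead0 (xs @ [R k])"
  shows "counting_inv L (R(k := snd (react (LS p) (R k)))) (LS(p := fst (react (LS p) (R k))))
           (insert (p, k) V)"
proof -
  have "uncounted (LS p) \<or> is_marker (LS p)" using inv p
    by (simp add: counting_inv_def leader_alone_def)
  then consider xs where "LS p = Elect xs" | "LS p = Idle" | c where "LS p = Marker c"
    by (cases "LS p") auto
  then show ?thesis
  proof cases
    case (1 xs)
    then have "\<not> R k < q" using moves no_rival act0_less by (auto simp: stalls_unfolded)
    then have "R k = token" using moves 1 s
      by (auto simp: stalls_unfolded idle_step_def split: if_splits)
    then show ?thesis using counting_inv_take_token[OF inv p _ k] 1 by (simp add: idle_step_def)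
  next
    case 2
    then have "R k = token" using moves s
      by (auto simp: stalls_unfolded idle_step_def split: if_splits)
    then show ?thesis using counting_inv_take_token[OF inv p _ k] 2 by (simp add: idle_step_def)
  next
    case (3 c)
    then have "R k = blank \<and> c < r" using moves s by (auto simp: stalls_unfolded split: if_splits)
    then show ?thesis using counting_inv_mark[OF inv p 3 _ k] 3 by simp
  qed
qed

lemma counting_inv_react:
  assumes inv: "counting_inv L R LS V" and p: "p < n" and k: "k < r" and s: "R k < q + 4"
    and no_rival: "\<And>xs. p \<noteq> L \<Longrightarrow> LS p = Elect xs \<Longrightarrow> R k < q \<Longrightarrow> \<not> lead0 (xs @ [R k])"
  shows "counting_inv L (R(k := snd (react (LS p) (R k)))) (LS(p := fst (react (LS p) (R k))))
           (insert (p, k) V)"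
proof (cases "stalls (LS p) (R k)")
  case True
  with inv show ?thesis by (rule counting_inv_stalls)
next
  case False
  show ?thesis
  proof (cases "p = L")
    case True
    then show ?thesis using counting_inv_leader_moves[OF inv k s] False by simp
  next
    case other: False
    show ?thesis using counting_inv_follower_moves[OF inv p other k s False] no_rival other by blast
  qed
qed

definition enabled :: "(nat \<Rightarrow> nat) \<Rightarrow> (nat \<Rightarrow> role) \<Rightarrow> bool" where
  "enabled R LS \<longleftrightarrow> (\<exists>p<n. \<exists>k<r. \<forall>R' LS'. conf_equiv R LS R' LS' \<longrightarrow> \<not> stalls (LS' p) (R' k))"

lemma not_stalls_if_overwrites:
  "s \<noteq> snd (react l s) \<Longrightarrow> q \<le> s \<or> q \<le> snd (react l s) \<Longrightarrow> \<not> stalls l s"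
  by (auto simp: stalls_def room_equiv_def)

lemma enabled_counted:
  assumes "p < n" and "k < r" and "\<not> uncounted (LS p)" and "q \<le> R k"
    and "R k \<noteq> snd (react (LS p) (R k))"
  shows "enabled R LS"
  unfolding enabled_def
proof (rule exI[of _ p], intro conjI exI[of _ k] allI impI)
  fix R' LS' assume equiv: "conf_equiv R LS R' LS'"
  have "LS' p = LS p" "R' k = R k"
    using assms conf_equiv_counted_role[OF equiv] conf_equiv_room[OF equiv] by auto
  then show "\<not> stalls (LS' p) (R' k)" using assms(4,5) by (simp add: not_stalls_if_overwrites)
qed (use assms in auto)

lemma token_out_enabled:
  assumes alone: "leader_alone L LS" and "Suc i < n" and T: "token_out i R LS V"
  shows "enabled R LS"
proof -
  obtain k where k: "k < r" "R k = token"
    using T count_rooms_eq_0_iff[of r R "\<lambda>v. v = token"] by (auto simp: token_out_def)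
  obtain p where p: "p < n" "p \<noteq> L" "p \<notin> markers LS"
  proof (rule ccontr)
    assume "\<not> thesis"
    then have "{..<n} - {L} \<subseteq> markers LS" using that by blast
    then have "card ({..<n} - {L}) \<le> card (markers LS)"
      by (rule card_mono[rotated]) (simp add: markers_def)
    then show False using assms by (auto simp: token_out_def leader_alone_def)
  qed
  then have idle: "uncounted (LS p)" using alone by (auto simp: leader_alone_def markers_def)
  show ?thesis
    unfolding enabled_def
  proof (rule exI[of _ p], intro conjI exI[of _ k] allI impI)
    fix R' LS' assume equiv: "conf_equiv R LS R' LS'"
    then have "uncounted (LS' p)" "R' k = token"
      using p k idle conf_equiv_room[OF equiv] by (auto simp: conf_equiv_def role_equiv_def)
    then show "\<not> stalls (LS' p) (R' k)"
      by (cases "LS' p") (auto simp: stalls_def room_equiv_def idle_step_def)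
  qed (use p k in auto)
qed

lemma marking_enabled:
  assumes alone: "leader_alone L LS" and L: "LS L = Gather c i"
    and G: "gather_inv L c i R V" and M: "marking i R LS V"
  shows "enabled R LS"
proof -
  obtain P c' where P': "P \<in> markers LS" "LS P = Marker c'" "c' \<le> r" "\<forall>k<r. R k \<noteq> token"
    "count_rooms r R (\<lambda>v. v = mark \<or> v = checked) = c'"
    using M unfolding marking_def by blast
  show ?thesis
  proof (cases "c' < r")
    case True
    then obtain k where k: "k < r" "R k \<noteq> mark" "R k \<noteq> checked"
      using P'(5) count_rooms_less_iff[of r R "\<lambda>v. v = mark \<or> v = checked"] by auto
    then have "R k = blank" using G P'(4) by (fastforce simp: gather_inv_def)
    with P' k True show ?thesis
      using marker_not_uncounted by (intro enabled_counted[of P k]) (auto simp: markers_def)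
  next
    case False
    then have all_marked: "\<forall>k<r. R k = mark \<or> R k = checked"
      using P'(3,5) count_rooms_less_iff[of r R "\<lambda>v. v = mark \<or> v = checked"] by auto
    obtain k where k: "k < r" "R k \<noteq> checked"
      using G count_rooms_less_iff[of r R "\<lambda>v. v = checked"] by (auto simp: gather_inv_def)
    then have "R k = mark" using all_marked by blast
    with alone L k show ?thesis by (intro enabled_counted[of L k]) (auto simp: leader_alone_def)
  qed
qed

lemma counting_inv_enabled:
  assumes inv: "counting_inv L R LS V" and not_done: "LS L \<noteq> Done"
  shows "enabled R LS"
proof -
  have alone: "leader_alone L LS" using inv by (simp add: counting_inv_def)
  then have L: "L < n" "\<not> uncounted (LS L)" by (auto simp: leader_alone_def)
  show ?thesis
  proof (cases "LS L")
    case (Sweep c)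
    then obtain k where k: "k < r" "R k < q"
      using inv count_rooms_less_iff[of r R "\<lambda>v. q \<le> v"]
      by (auto simp: counting_inv_def sweep_inv_def not_le)
    show ?thesis
      unfolding enabled_def
    proof (rule exI[of _ L], intro conjI exI[of _ k] allI impI)
      fix R' LS' assume equiv: "conf_equiv R LS R' LS'"
      then have "LS' L = Sweep c" "R' k < q"
        using Sweep L k conf_equiv_counted_role[OF equiv]
          by (auto simp: conf_equiv_def room_equiv_def)
      then show "\<not> stalls (LS' L) (R' k)" by (auto simp: stalls_def room_equiv_def sweep_step_def)
    qed (use L k in auto)
  next
    case (Launch i)
    then have "R 0 = blank" using inv r_ge_1 by (simp add: counting_inv_def launch_inv_def)
    with L Launch r_ge_1 show ?thesis by (intro enabled_counted[of L 0]) auto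
  next
    case (Reset c i)
    then obtain k where k: "k < r" "R k = checked"
      using inv count_rooms_less_iff[of r R "\<lambda>v. v = blank"]
        by (auto simp: counting_inv_def reset_inv_def)
    with L Reset show ?thesis by (intro enabled_counted[of L k]) auto
  next
    case (Gather c i)
    then have P: "gather_inv L c i R V" and "token_out i R LS V \<or> marking i R LS V"
      using inv by (auto simp: counting_inv_def)
    then show ?thesis
      using token_out_enabled[OF alone] marking_enabled[OF alone Gather P]
      by (auto simp: gather_inv_def)
  qed (use not_done alone in \<open>auto simp: leader_alone_def\<close>)
qed

end

locale counting_run = leader_election +
  fixes \<sigma> :: "nat \<Rightarrow> nat \<times> nat"
  assumes valid: "valid_schedule n r \<sigma>"
begin

abbreviation visitor :: "nat \<Rightarrow> nat" where "visitor t \<equiv> fst (\<sigma> t)"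
abbreviation room_at :: "nat \<Rightarrow> nat" where "room_at t \<equiv> snd (\<sigma> t)"

definition rooms :: "nat \<Rightarrow> nat \<Rightarrow> nat" where "rooms t = fst (run counter_act \<sigma> t)"
definition hists :: "nat \<Rightarrow> nat \<Rightarrow> nat list" where "hists t = snd (run counter_act \<sigma> t)"
definition roles :: "nat \<Rightarrow> nat \<Rightarrow> role" where "roles t p = role_of (hists t p)"
definition visits :: "nat \<Rightarrow> (nat \<times> nat) set" where "visits t = \<sigma> ` {..<t}"

lemma visitor_less: "visitor t < n" and room_at_less: "room_at t < r"
  using valid by (auto simp: valid_schedule_def)

lemma visited_again: "p < n \<Longrightarrow> k < r \<Longrightarrow> \<exists>t\<ge>N. \<sigma> t = (p, k)"
  using valid by (auto simp: valid_schedule_def)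

lemma obs_counter_act: "obs counter_act \<sigma> t = hists t (visitor t) @ [rooms t (room_at t)]"
  by (simp add: obs_def rooms_def hists_def)

lemma rooms_0: "rooms 0 k = 0" and roles_0: "roles 0 p = Elect []"
  by (simp_all add: rooms_def roles_def hists_def role_of_def)

lemma rooms_Suc:
  "rooms (Suc t) = (rooms t)(room_at t := snd (react (roles t (visitor t)) (rooms t (room_at t))))"
  by (simp add: rooms_def run_Suc_obs obs_counter_act[unfolded rooms_def hists_def] counter_act_snoc
      roles_def hists_def del: run.simps)

lemma hists_Suc:
  "hists (Suc t) = (hists t)(visitor t := hists t (visitor t) @ [rooms t (room_at t)])"
  by (simp add: hists_def run_Suc_obs obs_counter_act[unfolded rooms_def hists_def] rooms_def
      del: run.simps)

lemma roles_Suc: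
  "roles (Suc t) = (roles t)(visitor t := fst (react (roles t (visitor t)) (rooms t (room_at t))))"
  by (rule ext) (simp add: roles_def hists_Suc role_of_snoc)

lemma role_of_obs: "role_of (obs counter_act \<sigma> t) = roles (Suc t) (visitor t)"
  by (simp add: obs_counter_act roles_Suc role_of_snoc roles_def)

lemma rooms_less: "rooms t k < q + 4"
  by (induction t) (auto simp: rooms_0 rooms_Suc react_less)

lemma visits_Suc: "visits (Suc t) = insert (\<sigma> t) (visits t)"
  by (auto simp: visits_def lessThan_Suc)

definition elects :: "nat \<Rightarrow> bool" where
  "elects t \<longleftrightarrow> (\<exists>xs. roles t (visitor t) = Elect xs \<and> rooms t (room_at t) < q \<and>
                     lead0 (xs @ [rooms t (room_at t)]))"

lemma roles_before_elects:
  assumes "\<forall>t<T. \<not> elects t"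
  shows "(\<forall>p. roles T p = Elect (snd (run act0 \<sigma> T) p)) \<and> rooms T = fst (run act0 \<sigma> T)"
  using assms
proof (induction T)
  case 0 then show ?case by (simp add: roles_0 fun_eq_iff rooms_def)
next
  case (Suc T)
  then have IH: "\<forall>p. roles T p = Elect (snd (run act0 \<sigma> T) p)" "rooms T = fst (run act0 \<sigma> T)" by auto
  have "\<not> elects T" using Suc.prems by simp
  moreover have "rooms T (room_at T) < q" using IH(2) run_act0_less by simp
  ultimately have "\<not> lead0 (obs act0 \<sigma> T)" using IH by (simp add: elects_def obs_def)
  then have "react (roles T (visitor T)) (rooms T (room_at T)) =
      (Elect (obs act0 \<sigma> T), act0 (obs act0 \<sigma> T))"
    using IH \<open>rooms T (room_at T) < q\<close> by (simp add: obs_def)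
  then show ?case using IH by (simp add: roles_Suc rooms_Suc run_Suc_obs del: run.simps)
qed

lemma elects_exists: "\<exists>t. elects t"
proof (rule ccontr)
  assume none: "\<nexists>t. elects t"
  obtain t where lead: "lead0 (obs act0 \<sigma> t)" using leader_election_exists[OF election valid] by blast
  have "roles t (visitor t) = Elect (snd (run act0 \<sigma> t) (visitor t))" "rooms t = fst (run act0 \<sigma> t)"
    using roles_before_elects none by blast+
  then have "elects t" using lead run_act0_less by (simp add: elects_def obs_def)
  with none show False by blast
qed

definition t_lead :: nat where "t_lead = (LEAST t. elects t)"
definition leader :: nat where "leader = visitor t_lead"

lemma elects_t_lead: "elects t_lead"
  unfolding t_lead_def using elects_exists by (rule LeastI_ex)

lemma not_elects_before_t_lead: "t < t_lead \<Longrightarrow> \<not> elects t"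
  unfolding t_lead_def by (rule not_less_Least)

lemma leader_not_elect:
  assumes "t_lead < t"
  shows "\<not> is_elect (roles t leader)"
proof -
  have "Suc t_lead \<le> t" using assms by simp
  then show ?thesis
  proof (induction t rule: dec_induct)
    case base
    obtain xs where "roles t_lead leader = Elect xs" "rooms t_lead (room_at t_lead) < q"
      "lead0 (xs @ [rooms t_lead (room_at t_lead)])"
      using elects_t_lead by (auto simp: elects_def leader_def)
    then show ?case by (simp add: roles_Suc leader_def sweep_step_def)
  next
    case (step t)
    then show ?case using react_not_elect by (auto simp: roles_Suc)
  qed
qed

text \<open>
  The steps in which an electing prisoner sees an election state form, on their own, a run of
  the election strategy: no other step writes an election state or extends the history of an
  electing prisoner.
\<close>

definition election_step :: "nat \<Rightarrow> bool" where
  "election_step t \<longleftrightarrow> is_elect (roles t (visitor t)) \<and> rooms t (room_at t) < q"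

definition election_schedule :: "nat \<Rightarrow> (nat \<times> nat) list" where
  "election_schedule T = map \<sigma> (filter election_step [0..<T])"

definition election_run :: "nat \<Rightarrow> (nat \<Rightarrow> nat) \<times> (nat \<Rightarrow> nat list)" where
  "election_run T = run act0 (pad n r (election_schedule T)) (length (election_schedule T))"

lemma election_schedule_Suc:
  "election_schedule (Suc T) =
     (if election_step T then election_schedule T @ [\<sigma> T] else election_schedule T)"
  by (simp add: election_schedule_def)

lemma election_schedule_prefix: "T \<le> T' \<Longrightarrow> \<exists>zs. election_schedule T' = election_schedule T @ zs"
proof (induction T' rule: dec_induct)
  case (step m) then show ?case by (auto simp: election_schedule_Suc)
qed simp

lemma valid_election_schedule: "valid_schedule n r (pad n r (election_schedule T))"
  using n_ge_1 r_ge_1 visitor_less room_at_less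
  by (intro valid_schedule_pad) (auto simp: election_schedule_def)

lemma election_run_Suc:
  assumes "election_step T"
  defines "E \<equiv> election_run T"
  defines "h \<equiv> snd E (visitor T) @ [fst E (room_at T)]"
  shows "election_run (Suc T) = ((fst E)(room_at T := act0 h), (snd E)(visitor T := h))"
proof -
  let ?ys = "election_schedule T"
  have "election_run (Suc T) = run act0 (pad n r (?ys @ [\<sigma> T])) (Suc (length ?ys))"
    using assms(1) by (simp add: election_run_def election_schedule_Suc)
  also have "\<dots> = ((fst E)(room_at T := act0 h), (snd E)(visitor T := h))"
    unfolding run_Suc_obs obs_def run_pad_append pad_append_nth[of n r ?ys "\<sigma> T" "[]", simplified]
    by (simp add: E_def h_def election_run_def del: run.simps)
  finally show ?thesis .
qed

lemma election_run_agrees: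
  "(\<forall>k. rooms T k < q \<longrightarrow> fst (election_run T) k = rooms T k) \<and>
   (\<forall>p. is_elect (roles T p) \<longrightarrow> snd (election_run T) p = hists T p)"
proof (induction T)
  case 0 then show ?case by (simp add: election_run_def election_schedule_def rooms_def hists_def)
next
  case (Suc T)
  let ?p = "visitor T" and ?k = "room_at T" and ?s = "rooms T (room_at T)"
  show ?case
  proof (cases "election_step T")
    case True
    then obtain h where h: "roles T ?p = Elect h" and s: "?s < q"
      unfolding election_step_def by (cases "roles T ?p") auto
    have hist: "h = hists T ?p" using h role_of_Elect unfolding roles_def by blast
    have E: "snd (election_run T) ?p = hists T ?p" "fst (election_run T) ?k = ?s"
      using Suc.IH h s by auto
    show ?thesis
    proof (cases "lead0 (h @ [?s])")
      case True
      then show ?thesis using Suc.IH h s election_run_Suc[OF \<open>election_step T\<close>]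
        by (auto simp: rooms_Suc roles_Suc hists_Suc sweep_step_def)
    next
      case False
      then show ?thesis using Suc.IH h s hist E election_run_Suc[OF \<open>election_step T\<close>]
        by (auto simp: rooms_Suc roles_Suc hists_Suc)
    qed
  next
    case False
    then have "election_run (Suc T) = election_run T"
      by (simp add: election_run_def election_schedule_Suc)
    moreover have "(snd (react (roles T ?p) ?s) = ?s \<or> q \<le> snd (react (roles T ?p) ?s)) \<and>
        \<not> is_elect (fst (react (roles T ?p) ?s))"
      using False rooms_less by (intro react_outside_election) (auto simp: election_step_def)
    ultimately show ?thesis using Suc.IH by (auto simp: rooms_Suc roles_Suc hists_Suc)
  qed
qed

lemma elects_leads_in_election_run:
  assumes "elects t" and "t < T"
  shows "\<exists>m. fst (pad n r (election_schedule T) m) = visitor t \<and>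
             lead0 (obs act0 (pad n r (election_schedule T)) m)"
proof -
  let ?m = "length (election_schedule t)" and ?\<sigma> = "pad n r (election_schedule T)"
  obtain xs where xs: "roles t (visitor t) = Elect xs" "rooms t (room_at t) < q"
    "lead0 (xs @ [rooms t (room_at t)])"
    using assms(1) by (auto simp: elects_def)
  then have "election_step t" by (simp add: election_step_def)
  obtain zs where "election_schedule T = election_schedule (Suc t) @ zs"
    using election_schedule_prefix[of "Suc t" T] assms(2) by auto
  then have T: "election_schedule T = election_schedule t @ \<sigma> t # zs"
    using \<open>election_step t\<close> by (simp add: election_schedule_Suc)
  have at: "?\<sigma> ?m = \<sigma> t" unfolding T by (rule pad_append_nth)
  have "run act0 ?\<sigma> ?m = election_run t"
    unfolding T election_run_def by (rule run_pad_append)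
  moreover have "xs = hists t (visitor t)" using xs(1) role_of_Elect unfolding roles_def by blast
  ultimately have "obs act0 ?\<sigma> ?m = xs @ [rooms t (room_at t)]"
    using election_run_agrees[of t] xs at by (simp add: obs_def)
  then show ?thesis using at xs(3) by (intro exI[of _ ?m]) simp
qed

lemma elects_unique: "elects t \<Longrightarrow> t = t_lead"
proof (rule ccontr)
  assume el: "elects t" and "t \<noteq> t_lead"
  then have lt: "t_lead < t" using not_elects_before_t_lead by (metis linorder_neqE_nat)
  let ?\<sigma> = "pad n r (election_schedule (Suc t))"
  obtain m m' where "fst (?\<sigma> m) = leader" "lead0 (obs act0 ?\<sigma> m)"
    and "fst (?\<sigma> m') = visitor t" "lead0 (obs act0 ?\<sigma> m')"
    using elects_leads_in_election_run[OF elects_t_lead, of "Suc t"]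
      elects_leads_in_election_run[OF el, of "Suc t"] lt
    unfolding leader_def by auto
  then have "visitor t = leader"
    using leader_election_unique[OF election valid_election_schedule] by metis
  then show False using el leader_not_elect[OF lt] by (auto simp: elects_def)
qed

lemma counting_inv_Suc_t_lead:
  "counting_inv leader (rooms (Suc t_lead)) (roles (Suc t_lead)) (visits (Suc t_lead))"
proof -
  \<comment> \<open>The electing step acts exactly like a step of a leader already in role \<open>Sweep 0\<close>.\<close>
  let ?k = "room_at t_lead" and ?LS = "(roles t_lead)(leader := Sweep 0)"
  have before: "\<forall>p. roles t_lead p = Elect (snd (run act0 \<sigma> t_lead) p)"
      "rooms t_lead = fst (run act0 \<sigma> t_lead)"
    using roles_before_elects not_elects_before_t_lead by blast+
  then have below: "\<forall>k. rooms t_lead k < q" using run_act0_less by simp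
  obtain xs where xs: "roles t_lead leader = Elect xs" "lead0 (xs @ [rooms t_lead ?k])"
    using elects_t_lead by (auto simp: elects_def leader_def)
  have "leader_alone leader ?LS"
    using before visitor_less[of t_lead] by (auto simp: leader_alone_def leader_def)
  moreover have "sweep_inv leader 0 (rooms t_lead) ?LS (visits t_lead)"
    using below before(1) r_ge_1
    by (auto simp: sweep_inv_def count_rooms_eq_0_iff markers_def not_le[symmetric])
  ultimately have "counting_inv leader (rooms t_lead) ?LS (visits t_lead)"
    by (simp add: counting_inv_def)
  then have "counting_inv leader ((rooms t_lead)(?k := snd (react (?LS leader) (rooms t_lead ?k))))
      (?LS(leader := fst (react (?LS leader) (rooms t_lead ?k)))) (insert (leader, ?k) (visits t_lead))"
    by (rule counting_inv_react) (simp_all add: visitor_less room_at_less rooms_less leader_def)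
  then show ?thesis
    using xs below unfolding leader_def by (simp add: rooms_Suc roles_Suc visits_Suc)
qed

lemma counting_inv_after_election:
  assumes "t_lead < T"
  shows "counting_inv leader (rooms T) (roles T) (visits T)"
proof -
  have "Suc t_lead \<le> T" using assms by simp
  then show ?thesis
  proof (induction T rule: dec_induct)
    case base then show ?case by (rule counting_inv_Suc_t_lead)
  next
    case (step t)
    have "\<not> lead0 (xs @ [rooms t (room_at t)])"
      if "visitor t \<noteq> leader" "roles t (visitor t) = Elect xs" "rooms t (room_at t) < q" for xs
      using that elects_unique[of t] step.hyps by (auto simp: elects_def)
    then have "counting_inv leader
        ((rooms t)(room_at t := snd (react (roles t (visitor t)) (rooms t (room_at t)))))
        ((roles t)(visitor t := fst (react (roles t (visitor t)) (rooms t (room_at t)))))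
        (insert (visitor t, room_at t) (visits t))"
      using step.IH
        by (intro counting_inv_react) (simp_all add: visitor_less room_at_less rooms_less)
    then show ?case by (simp only: rooms_Suc roles_Suc visits_Suc prod.collapse)
  qed
qed

lemma counter_decl_safe:
  assumes "counter_decl (obs counter_act \<sigma> t)" and "p < n" and "k < r"
  shows "\<exists>t'\<le>t. \<sigma> t' = (p, k)"
proof -
  have declared: "roles (Suc t) (visitor t) = Done"
    using assms(1) role_of_obs by (simp add: counter_decl_def)
  have "t_lead < Suc t"
  proof (rule ccontr)
    assume "\<not> t_lead < Suc t"
    then have "roles (Suc t) (visitor t) = Elect (snd (run act0 \<sigma> (Suc t)) (visitor t))"
      using roles_before_elects not_elects_before_t_lead by simp
    with declared show False by simp
  qed
  then have inv: "counting_inv leader (rooms (Suc t)) (roles (Suc t)) (visits (Suc t))"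
    by (rule counting_inv_after_election)
  then have alone: "leader_alone leader (roles (Suc t))" by (simp add: counting_inv_def)
  then have "visitor t = leader"
    using declared visitor_less[of t] by (auto simp: leader_alone_def)
  then have D: "done_inv leader (rooms (Suc t)) (roles (Suc t)) (visits (Suc t))"
    using inv declared by (simp add: counting_inv_def)
  have "markers (roles (Suc t)) \<subseteq> {..<n} - {leader}"
    using leader_not_marker[OF alone] by (auto simp: markers_def)
  moreover have "card ({..<n} - {leader}) = n - 1" using alone by (simp add: leader_alone_def)
  ultimately have all_markers: "markers (roles (Suc t)) = {..<n} - {leader}"
    using D by (intro card_subset_eq) (auto simp: done_inv_def)
  have "visited_all (visits (Suc t)) p"
    using D all_markers assms(2)
      by (cases "p = leader") (auto simp: done_inv_def finished_markers_def)
  then have "(p, k) \<in> visits (Suc t)" using assms(3) by (simp add: visited_all_def)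
  then show ?thesis by (force simp: visits_def less_Suc_eq_le)
qed

definition potential :: "nat \<Rightarrow> nat" where
  "potential t = (\<Sum>p<n. progress (roles t p))"

lemma potential_Suc:
  "potential (Suc t) + progress (roles t (visitor t)) =
   potential t + progress (roles (Suc t) (visitor t))"
proof -
  let ?f = "\<lambda>p. progress (roles t p)" and ?v = "progress (roles (Suc t) (visitor t))"
  have "potential (Suc t) = sum (?f(visitor t := ?v)) {..<n}"
    unfolding potential_def by (rule sum.cong) (auto simp: roles_Suc)
  then show ?thesis
    using sum_fun_upd_add[of "{..<n}" "visitor t" ?f ?v] visitor_less[of t]
      by (simp add: potential_def)
qed

lemma potential_mono: "mono potential"
unfolding mono_iff_le_Suc
proof
  fix t
  have "progress (roles t (visitor t)) \<le> progress (roles (Suc t) (visitor t))"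
    using progress_react_mono[OF rooms_less] by (simp add: roles_Suc)
  then show "potential t \<le> potential (Suc t)" using potential_Suc[of t] by linarith
qed

lemma potential_le: "potential t \<le> n * progress Done"
proof -
  have "potential t \<le> (\<Sum>p<n. progress Done)"
    unfolding potential_def by (rule sum_mono) (rule progress_le_Done)
  then show ?thesis by simp
qed

lemma stalls_while_potential_constant:
  assumes "potential (Suc t) = potential t"
  shows "stalls (roles t (visitor t)) (rooms t (room_at t))"
  using assms potential_Suc[of t] rooms_less
    by (intro stalls_if_no_progress) (simp_all add: roles_Suc)

lemma conf_equiv_while_potential_constant:
  assumes const: "\<forall>t\<ge>N. potential t = potential N" and "N \<le> t"
  shows "conf_equiv (rooms N) (roles N) (rooms t) (roles t)"
  using \<open>N \<le> t\<close>
proof (induction t rule: dec_induct)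
  case base then show ?case by (rule conf_equiv_refl)
next
  case (step t)
  have "stalls (roles t (visitor t)) (rooms t (room_at t))"
    using const[rule_format, of t] const[rule_format, of "Suc t"] step.hyps
    by (intro stalls_while_potential_constant) simp
  then have "conf_equiv (rooms t) (roles t) (rooms (Suc t)) (roles (Suc t))"
    by (auto simp: stalls_def conf_equiv_def rooms_Suc roles_Suc room_equiv_def role_equiv_def)
  with step.IH show ?case by (rule conf_equiv_trans)
qed

lemma counter_decl_if_Done: "roles t (visitor t) = Done \<Longrightarrow> counter_decl (obs counter_act \<sigma> t)"
  by (simp add: counter_decl_def role_of_obs roles_Suc)

lemma counter_decl_eventually: "\<exists>t. counter_decl (obs counter_act \<sigma> t)"
proof -
  obtain N0 where const0: "\<forall>t\<ge>N0. potential t = potential N0"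
    using bounded_mono_stabilises[OF potential_mono potential_le] by blast
  define N where "N = max N0 (Suc t_lead)"
  have const: "\<forall>t\<ge>N. potential t = potential N"
  proof (intro allI impI)
    fix t assume "N \<le> t"
    then show "potential t = potential N"
      using const0[rule_format, of t] const0[rule_format, of N] by (simp add: N_def)
  qed
  have inv: "counting_inv leader (rooms N) (roles N) (visits N)"
    by (rule counting_inv_after_election) (simp add: N_def)
  then have leader_less: "leader < n" by (simp add: counting_inv_def leader_alone_def)
  show ?thesis
  proof (cases "roles N leader = Done")
    case True
    have "0 < r" using r_ge_1 by simp
    then obtain t where t: "t \<ge> N" "\<sigma> t = (leader, 0)" using visited_again[OF leader_less] by blast
    have "roles t leader = Done"
      using conf_equiv_counted_role[OF conf_equiv_while_potential_constant[OF const t(1)] leader_less] True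
      by simp
    then have "counter_decl (obs counter_act \<sigma> t)" using t(2) by (intro counter_decl_if_Done) simp
    then show ?thesis ..
  next
    case False
    then obtain p k where pk: "p < n" "k < r"
      and enabled: "\<forall>R' LS'. conf_equiv (rooms N) (roles N) R' LS' \<longrightarrow> \<not> stalls (LS' p) (R' k)"
      using counting_inv_enabled[OF inv] by (auto simp: enabled_def)
    obtain t where t: "t \<ge> N" "\<sigma> t = (p, k)" using visited_again[OF pk] by blast
    with enabled have "\<not> stalls (roles t p) (rooms t k)"
      using conf_equiv_while_potential_constant[OF const] by blast
    moreover have "stalls (roles t p) (rooms t k)"
      using stalls_while_potential_constant[of t] const[rule_format, of t] const[rule_format, of "Suc t"] t
      by simp
    ultimately show ?thesis by contradiction
  qed
qed

end

theorem mainTheorem7: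
  fixes n r q :: nat
  assumes "n \<ge> 1" and "r \<ge> 1" and "q \<ge> 1"
    and "\<exists>act lead. symmetric_leader_election n r q act lead"
  shows "\<exists>act decl. symmetric_winning n r (q + 4) act decl"
proof -
  obtain act0 lead0 where "symmetric_leader_election n r q act0 lead0" using assms(4) by blast
  then interpret leader_election q n r act0 lead0 using assms(1-3) by unfold_locales
  have "(\<exists>t. counter_decl (obs counter_act \<sigma> t)) \<and>
      (\<forall>t. counter_decl (obs counter_act \<sigma> t) \<longrightarrow> (\<forall>p<n. \<forall>k<r. \<exists>t'\<le>t. \<sigma> t' = (p, k)))"
    if "valid_schedule n r \<sigma>" for \<sigma>
  proof -
    interpret counting_run q n r act0 lead0 \<sigma> using that by unfold_locales
    show ?thesis
    proof (intro conjI allI impI counter_decl_eventually)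
      fix t p k assume "counter_decl (obs counter_act \<sigma> t)" "p < n" "k < r"
      then show "\<exists>t'\<le>t. \<sigma> t' = (p, k)" by (rule counter_decl_safe)
    qed
  qed
  then have "symmetric_winning n r (q + 4) counter_act counter_decl"
    using uses_states_counter_act by (simp add: symmetric_winning_def)
  then show ?thesis by blast
qed

end
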